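(* Let $i$ and $j$ be two components whose posterior intervals are nested, in the sense that $$0\le p_{\omega|y_i=1}\le p_{\omega|y_j=1}\le p_{\omega|y_j=0}\le p_{\omega|y_i=0}\le 1,$$ i.e. $I_i=[p_{\omega|y_i=1},p_{\omega|y_i=0}]\supseteq I_j=[p_{\omega|y_j=1},p_{\omega|y_j=0}]$. Then for every concave function $l^*:[0,1]\to\mathbb{R}$, $$L^{G}_\omega(i)\le L^{G}_\omega(j)\quad\text{and}\quad \mathrm{VoI}_G(i)\ge \mathrm{VoI}_G(j).$$
   Context: A system consists of $N$ binary components $c_1,\dots,c_N$ with random joint state $s=(s_1,\dots,s_N)\in\{0,1\}^N$ ($s_k=1$ means $c_k$ works, $s_k=0$ means it has failed), distributed according to an arbitrary prior distribution $p_s$. A structure function $\phi:\{0,1\}^N\to\{0,1\}$ gives the system state $u=\phi(s)$ ($u=0$ means system failure). The prior system failure probability is $p_\pi=\mathbb{P}[u=0]$. Inspecting component $c_k$ yields a binary observation $y_k$ ($y_k=0$ is an "alarm", $y_k=1$ a "silence"), jointly distributed with $s$. Let $h_k=\mathbb{P}[y_k=0]$, assumed to satisfy $0<h_k<1$ so that the posterior system failure probabilities $p_{\omega|y_k=b}=\mathbb{P}[u=0\mid y_k=b]$, $b\in\{0,1\}$, are defined. Global metric: given a concave function $l^*:[0,1]\to\mathbb{R}$ (e.g. $l^*(p)=\min_{A}\,[p\,l_{A,0}+(1-p)\,l_{A,1}]$ over a finite set of actions $A$ with expected losses $l_{A,0},l_{A,1}$ when the system is failed/working), define the prior loss $L^G_\pi=l^*(p_\pi)$,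 the expected posterior loss of inspecting $c_k$ $$L^G_\omega(k)=h_k\,l^*(p_{\omega|y_k=0})+(1-h_k)\,l^*(p_{\omega|y_k=1}),$$ and the value of information $\mathrm{VoI}_G(k)=L^G_\pi-L^G_\omega(k)$. *)

theory Defs
  imports "HOL-Probability.Probability"
begin

(* Components are indexed by a finite type 'c (so N = CARD('c)).
   s :: 'w => 'c => bool    joint component state (True = works, i.e. s_k = 1)
   phi :: ('c => bool) => bool   structure function (True = system works, u = 1)
   y :: 'c => 'w => bool    observations (False = alarm y_k = 0, True = silence y_k = 1) *)

definition prior_fail :: "'w pmf \<Rightarrow> ('w \<Rightarrow> 'c \<Rightarrow> bool) \<Rightarrow> (('c \<Rightarrow> bool) \<Rightarrow> bool) \<Rightarrow> real" where
  "prior_fail P s phi = measure_pmf.prob P {w. \<not> phi (s w)}"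

definition alarm_prob :: "'w pmf \<Rightarrow> ('c \<Rightarrow> 'w \<Rightarrow> bool) \<Rightarrow> 'c \<Rightarrow> real" where
  "alarm_prob P y k = measure_pmf.prob P {w. \<not> y k w}"

definition post_fail :: "'w pmf \<Rightarrow> ('w \<Rightarrow> 'c \<Rightarrow> bool) \<Rightarrow> (('c \<Rightarrow> bool) \<Rightarrow> bool)
    \<Rightarrow> ('c \<Rightarrow> 'w \<Rightarrow> bool) \<Rightarrow> 'c \<Rightarrow> bool \<Rightarrow> real" where
  "post_fail P s phi y k b =
     measure_pmf.prob P {w. \<not> phi (s w) \<and> y k w = b} / measure_pmf.prob P {w. y k w = b}"

definition LG_prior :: "(real \<Rightarrow> real) \<Rightarrow> 'w pmf \<Rightarrow> ('w \<Rightarrow> 'c \<Rightarrow> bool) \<Rightarrow> (('c \<Rightarrow> bool) \<Rightarrow> bool) \<Rightarrow> real" where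
  "LG_prior l P s phi = l (prior_fail P s phi)"

definition LG_post :: "(real \<Rightarrow> real) \<Rightarrow> 'w pmf \<Rightarrow> ('w \<Rightarrow> 'c \<Rightarrow> bool) \<Rightarrow> (('c \<Rightarrow> bool) \<Rightarrow> bool)
    \<Rightarrow> ('c \<Rightarrow> 'w \<Rightarrow> bool) \<Rightarrow> 'c \<Rightarrow> real" where
  "LG_post l P s phi y k =
     alarm_prob P y k * l (post_fail P s phi y k False)
     + (1 - alarm_prob P y k) * l (post_fail P s phi y k True)"

definition VoI_G :: "(real \<Rightarrow> real) \<Rightarrow> 'w pmf \<Rightarrow> ('w \<Rightarrow> 'c \<Rightarrow> bool) \<Rightarrow> (('c \<Rightarrow> bool) \<Rightarrow> bool)
    \<Rightarrow> ('c \<Rightarrow> 'w \<Rightarrow> bool) \<Rightarrow> 'c \<Rightarrow> real" where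
  "VoI_G l P s phi y k = LG_prior l P s phi - LG_post l P s phi y k"

end

theory Submission
  imports Defs
begin

text \<open>By the law of total probability the two posteriors of either inspection, weighted by
  \<open>h\<^sub>k\<close> and \<open>1 - h\<^sub>k\<close>, average to the same prior \<open>p\<^sub>\<pi>\<close>.
  Nesting of the intervals makes the pair of \<open>i\<close> a mean-preserving spread of the pair of \<open>j\<close>.
  On \<open>I\<^sub>i\<close> the concave loss lies above its chord over \<open>I\<^sub>i\<close>, which is affine and agrees with it at
  the endpoints; hence spreading the posteriors out to those endpoints can only lower the
  expected loss.\<close>

lemma concave_on_mean_preserving_spread:
  fixes f :: "real \<Rightarrow> real"
  assumes conc: "concave_on {a..d} f"
    and bc: "b \<in> {a..d}" "c \<in> {a..d}"
    and q: "0 \<le> q" "q \<le> 1"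
    and mean: "p * d + (1 - p) * a = q * c + (1 - q) * b"
  shows "p * f d + (1 - p) * f a \<le> q * f c + (1 - q) * f b"
proof -
  define k where "k = (f d - f a) / (d - a)"
  define g where "g x = f a + k * (x - a)" for x
  have chord_le: "g x \<le> f x" if "x \<in> {a..d}" for x
    using concave_onD_Icc'[OF conc that] by (simp add: g_def k_def)
  have g_affine: "g (t * u + (1 - t) * v) = t * g u + (1 - t) * g v" for t u v
    by (simp add: g_def algebra_simps)
  have g_ends: "g a = f a" "g d = f d"
    by (cases "a = d"; simp add: g_def k_def)+
  have "p * f d + (1 - p) * f a = g (p * d + (1 - p) * a)"
    by (simp add: g_affine g_ends)
  also have "\<dots> = q * g c + (1 - q) * g b"
    by (simp add: mean g_affine)
  also have "\<dots> \<le> q * f c + (1 - q) * f b"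
    using chord_le[OF bc(1)] chord_le[OF bc(2)] q
    by (intro add_mono mult_left_mono) auto
  finally show ?thesis .
qed

lemma prob_mult_cond_prob:
  "measure_pmf.prob P {w. B w} * (measure_pmf.prob P {w. A w \<and> B w} / measure_pmf.prob P {w. B w})
     = measure_pmf.prob P {w. A w \<and> B w}"
proof (cases "measure_pmf.prob P {w. B w} = 0")
  case True
  have "measure_pmf.prob P {w. A w \<and> B w} \<le> measure_pmf.prob P {w. B w}"
    by (intro measure_pmf.finite_measure_mono) auto
  with True show ?thesis
    by (simp add: measure_nonneg order_antisym)
qed simp

text \<open>Since \<open>x / 0 = 0\<close>, the law of total probability holds even when \<open>h\<^sub>k \<in> {0, 1}\<close>.\<close>

lemma prior_fail_eq_average_post_fail:
  "alarm_prob P y k * post_fail P s phi y k False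
     + (1 - alarm_prob P y k) * post_fail P s phi y k True = prior_fail P s phi"
proof -
  have silence: "measure_pmf.prob P {w. y k w = True} = 1 - alarm_prob P y k"
    using measure_pmf.prob_compl[of "{w. \<not> y k w}" P]
    by (simp add: alarm_prob_def Compl_eq_Diff_UNIV[symmetric] Collect_neg_eq[symmetric])
  have alarm: "measure_pmf.prob P {w. y k w = False} = alarm_prob P y k"
    by (simp add: alarm_prob_def)
  have "{w. \<not> phi (s w)} = {w. \<not> phi (s w) \<and> y k w = False} \<union> {w. \<not> phi (s w) \<and> y k w = True}"
    by auto
  then have split: "prior_fail P s phi = measure_pmf.prob P {w. \<not> phi (s w) \<and> y k w = False}
      + measure_pmf.prob P {w. \<not> phi (s w) \<and> y k w = True}"
    unfolding prior_fail_def by (simp add: measure_pmf.finite_measure_Union disjoint_iff)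
  show ?thesis
    using prob_mult_cond_prob[of P "\<lambda>w. y k w = False" "\<lambda>w. \<not> phi (s w)"]
      prob_mult_cond_prob[of P "\<lambda>w. y k w = True" "\<lambda>w. \<not> phi (s w)"]
    unfolding post_fail_def split silence alarm by simp
qed

theorem mainTheorem1:
  fixes P :: "'w pmf"
    and s :: "'w \<Rightarrow> 'c::finite \<Rightarrow> bool"
    and phi :: "('c \<Rightarrow> bool) \<Rightarrow> bool"
    and y :: "'c \<Rightarrow> 'w \<Rightarrow> bool"
    and i j :: 'c
    and l :: "real \<Rightarrow> real"
  assumes hi: "0 < alarm_prob P y i" "alarm_prob P y i < 1"
    and hj: "0 < alarm_prob P y j" "alarm_prob P y j < 1"
    and nest: "0 \<le> post_fail P s phi y i True"
      "post_fail P s phi y i True \<le> post_fail P s phi y j True"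
      "post_fail P s phi y j True \<le> post_fail P s phi y j False"
      "post_fail P s phi y j False \<le> post_fail P s phi y i False"
      "post_fail P s phi y i False \<le> 1"
    and conc: "concave_on {0..1} l"
  shows "LG_post l P s phi y i \<le> LG_post l P s phi y j
         \<and> VoI_G l P s phi y i \<ge> VoI_G l P s phi y j"
proof -
  let ?I = "{post_fail P s phi y i True..post_fail P s phi y i False}"
  have "concave_on ?I l"
    using conc nest unfolding concave_on_def by (elim convex_on_subset) auto
  moreover have "alarm_prob P y i * post_fail P s phi y i False
      + (1 - alarm_prob P y i) * post_fail P s phi y i True
    = alarm_prob P y j * post_fail P s phi y j False
      + (1 - alarm_prob P y j) * post_fail P s phi y j True"
    by (simp only: prior_fail_eq_average_post_fail)
  ultimately have "LG_post l P s phi y i \<le> LG_post l P s phi y j"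
    unfolding LG_post_def
    using nest hj by (intro concave_on_mean_preserving_spread) auto
  then show ?thesis
    unfolding VoI_G_def by simp
qed

end
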